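(* In the standing setting, for all $t\in\{1,\dots,\overline R\}$, $k\in\{0,\dots,m\}$ and $\delta\in\{0,\dots,N\}$, $$\varphi^v(t,k,\delta)\le v\big(\sigma^v(t-1)\wedge k\big)-\big(\sigma^v(t-1)\wedge k\big)\,p_{t-1}.$$
   Context: Standing setting. Integers $n\ge2$, $m\ge1$; $N:=(n-1)m$. Reals $p_{\mathrm{init}}\ge0$, $\Delta P>0$; the price at round $t\ge0$ is $p_t:=p_{\mathrm{init}}+t\Delta P$. The player's valuation $v:\{0,\dots,m\}\to[0,\infty)$ satisfies $v(0)=0$ and is non-decreasing and concave. $\overline R:=\lceil (v(1)-p_{\mathrm{init}})/\Delta P\rceil$, assumed $\ge1$. For $t\ge0$, $\sigma^v(t):=\min\operatorname{argmax}_{0\le u\le m}(v(u)-up_t)$. The opponent is given by random variables $Z_1\ge Z_2\ge\dots\ge Z_N\ge0$ (a.s.) on a probability space $(\Omega,\mathcal F,\mathbb P)$; its demand at price $p$ is $\delta(p):=\sum_{j=1}^N\mathbf 1\{Z_j>p\}$. For $t\ge1$ fix transition kernels $K_t(\delta'\mid\delta)$ ($\delta,\delta'\in\{0,\dots,N\}$), each $K_t(\cdot\mid\delta)$ a probability on $\{0,\dots,\delta\}$, with $K_t(\delta'\mid\delta)=\mathbb P(\delta(p_t)=\delta'\mid\delta(p_{t-1})=\delta)$ whenever $\mathbb P(\delta(p_{t-1})=\delta)>0$. Value function: for $t\in\{1,\dots,\overline R\}$, $k\in\{0,\dots,m\}$, $\delta\in\{0,\dots,N\}$: $\varphi^v(t,k,\delta):=v(k)-kp_{t-1}$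 if $k+\delta\le m$; $:=\max_{0\le u\le k}\sum_{\delta'=0}^N K_t(\delta'\mid\delta)\varphi^v(t+1,u,\delta')$ if $k+\delta>m$ and $t<\overline R$; $:=0$ if $k+\delta>m$ and $t=\overline R$. $a\wedge b:=\min(a,b)$. *)

theory Defs
  imports "HOL-Probability.Probability"
begin

definition price :: "real \<Rightarrow> real \<Rightarrow> nat \<Rightarrow> real" where
  "price pinit dP t = pinit + real t * dP"

definition concave_on_upto :: "nat \<Rightarrow> (nat \<Rightarrow> real) \<Rightarrow> bool" where
  "concave_on_upto m v \<longleftrightarrow> (\<forall>u. 1 \<le> u \<and> u + 1 \<le> m \<longrightarrow> v (u+1) - v u \<le> v u - v (u-1))"

definition Rbar :: "(nat \<Rightarrow> real) \<Rightarrow> real \<Rightarrow> real \<Rightarrow> int" where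
  "Rbar v pinit dP = \<lceil>(v 1 - pinit) / dP\<rceil>"

definition sigma :: "nat \<Rightarrow> (nat \<Rightarrow> real) \<Rightarrow> real \<Rightarrow> real \<Rightarrow> nat \<Rightarrow> nat" where
  "sigma m v pinit dP t =
     (LEAST u. u \<le> m \<and> (\<forall>w\<le>m. v w - real w * price pinit dP t \<le> v u - real u * price pinit dP t))"

definition demand :: "nat \<Rightarrow> (nat \<Rightarrow> 'a \<Rightarrow> real) \<Rightarrow> 'a \<Rightarrow> real \<Rightarrow> nat" where
  "demand N Z \<omega> p = card {j \<in> {1..N}. Z j \<omega> > p}"

text \<open>Auxiliary recursion for the value function, indexed by the remaining
  number of rounds d = Rbar - t. K t d' d stands for K_t(d' | d).\<close>
primrec phiR :: "nat \<Rightarrow> nat \<Rightarrow> (nat \<Rightarrow> real) \<Rightarrow> real \<Rightarrow> real \<Rightarrow> (nat \<Rightarrow> nat \<Rightarrow> nat \<Rightarrow> real)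
                  \<Rightarrow> nat \<Rightarrow> nat \<Rightarrow> nat \<Rightarrow> nat \<Rightarrow> real" where
  "phiR m N v pinit dP K 0 t k d =
     (if k + d \<le> m then v k - real k * price pinit dP (t - 1) else 0)"
| "phiR m N v pinit dP K (Suc r) t k d =
     (if k + d \<le> m then v k - real k * price pinit dP (t - 1)
      else Max ((\<lambda>u. \<Sum>d'\<in>{0..N}. K t d' d * phiR m N v pinit dP K r (t+1) u d') ` {0..k}))"

definition phi :: "nat \<Rightarrow> nat \<Rightarrow> (nat \<Rightarrow> real) \<Rightarrow> real \<Rightarrow> real \<Rightarrow> (nat \<Rightarrow> nat \<Rightarrow> nat \<Rightarrow> real)
                  \<Rightarrow> nat \<Rightarrow> nat \<Rightarrow> nat \<Rightarrow> real" where
  "phi m N v pinit dP K t k d = phiR m N v pinit dP K (nat (Rbar v pinit dP) - t) t k d"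

end

theory Submission
  imports Defs
begin

text \<open>By backward induction, \<open>\<phi>\<^sup>v(t,k,\<delta>)\<close> never exceeds the best immediate payoff
  \<open>max {v u - u p\<^sub>t\<^sub>-\<^sub>1 | u \<le> k}\<close>: stopping realises one term of this maximum, and
  continuing yields an average of values that, by induction, are bounded by the same kind of
  maximum over fewer units at the higher price \<open>p\<^sub>t\<close>. Since \<open>v\<close> is concave, so is
  \<open>u \<mapsto> v u - u p\<close>, which is therefore nondecreasing up to any of its maximisers;
  hence the maximum over \<open>u \<le> k\<close> is attained at \<open>min (\<sigma>\<^sup>v(t-1)) k\<close>.\<close>

definition best_payoff :: "(nat \<Rightarrow> real) \<Rightarrow> real \<Rightarrow> nat \<Rightarrow> real" where
  "best_payoff v p k = Max ((\<lambda>u. v u - real u * p) ` {0..k})"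

lemma best_payoff_ge: "u \<le> k \<Longrightarrow> v u - real u * p \<le> best_payoff v p k"
  unfolding best_payoff_def by (intro Max_ge) auto

lemma best_payoff_mono: "k \<le> k' \<Longrightarrow> best_payoff v p k \<le> best_payoff v p k'"
  unfolding best_payoff_def by (intro Max_mono) auto

lemma best_payoff_antimono_price:
  assumes "p \<le> p'"
  shows "best_payoff v p' k \<le> best_payoff v p k"
  unfolding best_payoff_def[of v p']
proof (intro Max.boundedI)
  fix x assume "x \<in> (\<lambda>u. v u - real u * p') ` {0..k}"
  then obtain u where u: "u \<le> k" and x: "x = v u - real u * p'" by auto
  have "x \<le> v u - real u * p" using x assms by (simp add: mult_left_mono)
  also have "\<dots> \<le> best_payoff v p k" using u by (rule best_payoff_ge)
  finally show "x \<le> best_payoff v p k" .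
qed auto

lemma convex_combination_le:
  assumes "finite A" "\<And>x. x \<in> A \<Longrightarrow> 0 \<le> w x" "sum w A = 1" "\<And>x. x \<in> A \<Longrightarrow> f x \<le> c"
  shows "(\<Sum>x\<in>A. w x * f x) \<le> (c :: real)"
proof -
  have "(\<Sum>x\<in>A. w x * f x) \<le> (\<Sum>x\<in>A. w x * c)"
    using assms by (intro sum_mono mult_left_mono) auto
  also have "\<dots> = c" using assms(3) by (simp add: sum_distrib_right[symmetric])
  finally show ?thesis .
qed

lemma sum_atLeastAtMost_zero_tail:
  fixes w :: "nat \<Rightarrow> 'a::comm_monoid_add"
  assumes "d \<le> N" "\<And>i. d < i \<Longrightarrow> w i = 0"
  shows "sum w {0..N} = sum w {0..d}"
  using assms by (intro sum.mono_neutral_right) auto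

lemma phiR_le_best_payoff:
  assumes dP: "dP \<ge> 0" and v0: "v 0 = 0"
    and K_nonneg: "\<forall>s\<ge>1. \<forall>d1\<le>N. \<forall>d2. K s d2 d1 \<ge> 0"
    and K_supp: "\<forall>s\<ge>1. \<forall>d1\<le>N. \<forall>d2. d2 > d1 \<longrightarrow> K s d2 d1 = 0"
    and K_sum: "\<forall>s\<ge>1. \<forall>d1\<le>N. (\<Sum>d2\<in>{0..d1}. K s d2 d1) = 1"
  shows "1 \<le> t \<Longrightarrow> d \<le> N \<Longrightarrow>
    phiR m N v pinit dP K r t k d \<le> best_payoff v (price pinit dP (t-1)) k"
proof (induction r arbitrary: t k d)
  case 0
  show ?case
  proof (cases "k + d \<le> m")
    case True
    then show ?thesis using best_payoff_ge[of k k v] by simp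
  next
    case False
    then show ?thesis using best_payoff_ge[of 0 k v] v0 by simp
  qed
next
  case (Suc r)
  show ?case
  proof (cases "k + d \<le> m")
    case True
    then show ?thesis using best_payoff_ge[of k k v] by simp
  next
    case False
    have K_t: "\<And>d'. 0 \<le> K t d' d" "\<And>d'. d < d' \<Longrightarrow> K t d' d = 0"
      "(\<Sum>d'\<in>{0..d}. K t d' d) = 1"
      using K_nonneg K_supp K_sum Suc.prems by simp_all
    have continuation_le:
      "(\<Sum>d'\<in>{0..N}. K t d' d * phiR m N v pinit dP K r (t+1) u d')
         \<le> best_payoff v (price pinit dP (t-1)) k" if u: "u \<le> k" for u
    proof -
      have "(\<Sum>d'\<in>{0..N}. K t d' d * phiR m N v pinit dP K r (t+1) u d')
            \<le> best_payoff v (price pinit dP t) u"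
      proof (rule convex_combination_le)
        show "(\<Sum>d'\<in>{0..N}. K t d' d) = 1"
          using sum_atLeastAtMost_zero_tail[OF Suc.prems(2), of "\<lambda>d'. K t d' d"] K_t(2,3) by simp
        show "phiR m N v pinit dP K r (t+1) u d' \<le> best_payoff v (price pinit dP t) u"
          if "d' \<in> {0..N}" for d'
          using Suc.IH[of "t+1" d' u] that by simp
      qed (simp_all add: K_t(1))
      also have "\<dots> \<le> best_payoff v (price pinit dP (t-1)) u"
        using dP by (intro best_payoff_antimono_price) (simp add: price_def mult_right_mono)
      also have "\<dots> \<le> best_payoff v (price pinit dP (t-1)) k"
        using u by (rule best_payoff_mono)
      finally show ?thesis .
    qed
    have "phiR m N v pinit dP K (Suc r) t k d
        = Max ((\<lambda>u. \<Sum>d'\<in>{0..N}. K t d' d * phiR m N v pinit dP K r (t+1) u d') ` {0..k})"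
      using False by simp
    also have "\<dots> \<le> best_payoff v (price pinit dP (t-1)) k"
      using continuation_le by (intro Max.boundedI) auto
    finally show ?thesis .
  qed
qed

lemma concave_on_upto_minus_linear:
  "concave_on_upto m v \<Longrightarrow> concave_on_upto m (\<lambda>u. v u - real u * p)"
  unfolding concave_on_upto_def by (auto simp: algebra_simps)

lemma concave_on_uptoD:
  "concave_on_upto m g \<Longrightarrow> 1 \<le> u \<Longrightarrow> u + 1 \<le> m \<Longrightarrow> g (u+1) - g u \<le> g u - g (u-1)"
  unfolding concave_on_upto_def by blast

lemma concave_on_upto_increments_antimono:
  assumes "concave_on_upto m g" "w \<le> w'" "w' + 1 \<le> m"
  shows "g (w'+1) - g w' \<le> g (w+1) - g w"
  using assms(2,3)
proof (induction w' rule: dec_induct)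
  case (step n)
  have "g (Suc n + 1) - g (Suc n) \<le> g (Suc n) - g n"
    using concave_on_uptoD[OF assms(1), of "Suc n"] step.prems by simp
  then show ?case using step by simp
qed simp

lemma concave_on_upto_mono_below_max:
  assumes g: "concave_on_upto m g" and s: "s \<le> m \<and> (\<forall>w\<le>m. g w \<le> g s)"
    and "u \<le> k" "k \<le> s"
  shows "g u \<le> g k"
  using assms(3,4)
proof (induction k rule: dec_induct)
  case (step k)
  have "g (s-1) \<le> g s" using s by (simp add: le_diff_conv)
  moreover have "g (s-1+1) - g (s-1) \<le> g (k+1) - g k"
    using step s by (intro concave_on_upto_increments_antimono[OF g]) auto
  ultimately show ?case using step by simp
qed simp

lemma best_payoff_at_min_maximiser:
  assumes v: "concave_on_upto m v" and "k \<le> m"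
    and s_max: "s \<le> m \<and> (\<forall>w\<le>m. v w - real w * p \<le> v s - real s * p)"
  shows "best_payoff v p k = v (min s k) - real (min s k) * p"
proof (rule antisym)
  let ?g = "\<lambda>u. v u - real u * p"
  have "?g u \<le> ?g (min s k)" if "u \<le> k" for u
  proof (cases "s \<le> k")
    case True
    then show ?thesis using s_max that \<open>k \<le> m\<close> by auto
  next
    case False
    then show ?thesis
      using concave_on_upto_mono_below_max[OF concave_on_upto_minus_linear[OF v] s_max that]
      by simp
  qed
  then show "best_payoff v p k \<le> ?g (min s k)"
    unfolding best_payoff_def by (intro Max.boundedI) auto
qed (simp add: best_payoff_ge)

lemma sigma_maximises:
  fixes v :: "nat \<Rightarrow> real"
  shows "sigma m v pinit dP T \<le> m \<and>
    (\<forall>w\<le>m. v w - real w * price pinit dP T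
       \<le> v (sigma m v pinit dP T) - real (sigma m v pinit dP T) * price pinit dP T)"
proof -
  let ?g = "\<lambda>u. v u - real u * price pinit dP T"
  let ?P = "\<lambda>s. s \<le> m \<and> (\<forall>w\<le>m. ?g w \<le> ?g s)"
  have "Max (?g ` {0..m}) \<in> ?g ` {0..m}" by (intro Max_in) auto
  then obtain s where max: "Max (?g ` {0..m}) = ?g s" and "s \<in> {0..m}" ..
  then have "?P s"
    by (auto simp flip: max intro: Max_ge)
  then have "?P (LEAST s. ?P s)" by (rule LeastI)
  then show ?thesis unfolding sigma_def .
qed

theorem mainTheorem9:
  fixes n m N :: nat and pinit dP :: real and v :: "nat \<Rightarrow> real"
    and M :: "'a measure" and Z :: "nat \<Rightarrow> 'a \<Rightarrow> real"
    and K :: "nat \<Rightarrow> nat \<Rightarrow> nat \<Rightarrow> real"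
    and t k d :: nat
  assumes n2: "n \<ge> 2" and m1: "m \<ge> 1" and N_def: "N = (n - 1) * m"
    and pinit: "pinit \<ge> 0" and dP: "dP > 0"
    and v0: "v 0 = 0"
    and v_nonneg: "\<forall>u\<le>m. v u \<ge> 0"
    and v_mono: "\<forall>u w. u \<le> w \<and> w \<le> m \<longrightarrow> v u \<le> v w"
    and v_concave: "concave_on_upto m v"
    and R1: "Rbar v pinit dP \<ge> 1"
    and M: "prob_space M"
    and Z_meas: "\<forall>j\<in>{1..N}. Z j \<in> borel_measurable M"
    and Z_ord: "AE \<omega> in M. (\<forall>j\<in>{1..<N}. Z (j+1) \<omega> \<le> Z j \<omega>) \<and> (\<forall>j\<in>{1..N}. Z j \<omega> \<ge> 0)"
    and K_nonneg: "\<forall>s\<ge>1. \<forall>d1\<le>N. \<forall>d2. K s d2 d1 \<ge> 0"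
    and K_supp: "\<forall>s\<ge>1. \<forall>d1\<le>N. \<forall>d2. d2 > d1 \<longrightarrow> K s d2 d1 = 0"
    and K_sum: "\<forall>s\<ge>1. \<forall>d1\<le>N. (\<Sum>d2\<in>{0..d1}. K s d2 d1) = 1"
    and K_cond: "\<forall>s\<ge>1. \<forall>d1\<le>N. \<forall>d2\<le>N.
        measure M {\<omega>\<in>space M. demand N Z \<omega> (price pinit dP (s-1)) = d1} > 0 \<longrightarrow>
        K s d2 d1 =
          measure M {\<omega>\<in>space M. demand N Z \<omega> (price pinit dP s) = d2
                                \<and> demand N Z \<omega> (price pinit dP (s-1)) = d1}
          / measure M {\<omega>\<in>space M. demand N Z \<omega> (price pinit dP (s-1)) = d1}"
    and t: "1 \<le> t" "int t \<le> Rbar v pinit dP" and k: "k \<le> m" and d: "d \<le> N"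
  shows "phi m N v pinit dP K t k d
         \<le> v (min (sigma m v pinit dP (t-1)) k)
           - real (min (sigma m v pinit dP (t-1)) k) * price pinit dP (t-1)"
proof -
  \<comment> \<open>Only the stochasticity of the kernels matters; their link to the opponent's demand does not.\<close>
  have "phi m N v pinit dP K t k d \<le> best_payoff v (price pinit dP (t-1)) k"
    unfolding phi_def
    using phiR_le_best_payoff[of dP v N K t d] less_imp_le[OF dP] v0 K_nonneg K_supp K_sum t(1) d
    by blast
  also have "\<dots> = v (min (sigma m v pinit dP (t-1)) k)
           - real (min (sigma m v pinit dP (t-1)) k) * price pinit dP (t-1)"
    by (rule best_payoff_at_min_maximiser[OF v_concave k sigma_maximises])
  finally show ?thesis .
qed

end
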